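(* Let $S$ be a skew lattice that is strongly distributive or co-strongly distributive. Then $S$ is a left distributive solution of the Yang–Baxter equation.
   Context: A skew lattice is a set $S$ with two binary operations $\wedge,\vee$, each idempotent and associative, satisfying the absorption laws $x\wedge(x\vee y)=x=x\vee(x\wedge y)$ and $(x\wedge y)\vee y=y=(x\vee y)\wedge y$ for all $x,y\in S$. $S$ is strongly distributive if it satisfies $(x\vee y)\wedge z=(x\wedge z)\vee(y\wedge z)$ and $x\wedge(y\vee z)=(x\wedge y)\vee(x\wedge z)$; it is co-strongly distributive if it satisfies $(x\wedge y)\vee z=(x\vee z)\wedge(y\vee z)$ and $x\vee(y\wedge z)=(x\vee y)\wedge(x\vee z)$. $S$ is a left distributive solution if $r_L(x,y)=(x\wedge y,y\vee x)$ satisfies $(r_L\times\mathrm{id})\circ(\mathrm{id}\times r_L)\circ(r_L\times\mathrm{id})=(\mathrm{id}\times r_L)\circ(r_L\times\mathrm{id})\circ(\mathrm{id}\times r_L)$. *)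

theory Defs
  imports Main
begin

definition skew_lattice :: "('a \<Rightarrow> 'a \<Rightarrow> 'a) \<Rightarrow> ('a \<Rightarrow> 'a \<Rightarrow> 'a) \<Rightarrow> bool" where
  "skew_lattice meet join \<longleftrightarrow>
     (\<forall>x. meet x x = x) \<and> (\<forall>x. join x x = x) \<and>
     (\<forall>x y z. meet (meet x y) z = meet x (meet y z)) \<and>
     (\<forall>x y z. join (join x y) z = join x (join y z)) \<and>
     (\<forall>x y. meet x (join x y) = x \<and> join x (meet x y) = x) \<and>
     (\<forall>x y. join (meet x y) y = y \<and> meet (join x y) y = y)"

definition strongly_distributive :: "('a \<Rightarrow> 'a \<Rightarrow> 'a) \<Rightarrow> ('a \<Rightarrow> 'a \<Rightarrow> 'a) \<Rightarrow> bool" where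
  "strongly_distributive meet join \<longleftrightarrow>
     (\<forall>x y z. meet (join x y) z = join (meet x z) (meet y z)) \<and>
     (\<forall>x y z. meet x (join y z) = join (meet x y) (meet x z))"

definition co_strongly_distributive :: "('a \<Rightarrow> 'a \<Rightarrow> 'a) \<Rightarrow> ('a \<Rightarrow> 'a \<Rightarrow> 'a) \<Rightarrow> bool" where
  "co_strongly_distributive meet join \<longleftrightarrow>
     (\<forall>x y z. join (meet x y) z = meet (join x z) (join y z)) \<and>
     (\<forall>x y z. join x (meet y z) = meet (join x y) (join x z))"

definition r_L :: "('a \<Rightarrow> 'a \<Rightarrow> 'a) \<Rightarrow> ('a \<Rightarrow> 'a \<Rightarrow> 'a) \<Rightarrow> 'a \<times> 'a \<Rightarrow> 'a \<times> 'a" where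
  "r_L meet join p = (meet (fst p) (snd p), join (snd p) (fst p))"

definition r12 :: "('a \<times> 'a \<Rightarrow> 'a \<times> 'a) \<Rightarrow> 'a \<times> 'a \<times> 'a \<Rightarrow> 'a \<times> 'a \<times> 'a" where
  "r12 r t = (case t of (x, y, z) \<Rightarrow> (case r (x, y) of (u, v) \<Rightarrow> (u, v, z)))"

definition r23 :: "('a \<times> 'a \<Rightarrow> 'a \<times> 'a) \<Rightarrow> 'a \<times> 'a \<times> 'a \<Rightarrow> 'a \<times> 'a \<times> 'a" where
  "r23 r t = (case t of (x, y, z) \<Rightarrow> (case r (y, z) of (v, w) \<Rightarrow> (x, v, w)))"

definition braided :: "('a \<times> 'a \<Rightarrow> 'a \<times> 'a) \<Rightarrow> bool" where
  "braided r \<longleftrightarrow> r12 r \<circ> r23 r \<circ> r12 r = r23 r \<circ> r12 r \<circ> r23 r"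

definition left_distributive_solution :: "('a \<Rightarrow> 'a \<Rightarrow> 'a) \<Rightarrow> ('a \<Rightarrow> 'a \<Rightarrow> 'a) \<Rightarrow> bool" where
  "left_distributive_solution meet join \<longleftrightarrow> braided (r_L meet join)"

end

theory Submission
  imports Defs
begin

text \<open>Both sides of the braid relation for \<open>r_L\<close> on \<open>(x, y, z)\<close> are computed componentwise.
The first and last components agree in every skew lattice by associativity and absorption.
The middle components agree by a short distributivity calculation in the strongly
distributive case; the co-strongly distributive case is the strongly distributive case
of the dual skew lattice obtained by exchanging \<open>\<and>\<close> and \<open>\<or>\<close>, under which the middle
identity is mapped to itself with \<open>x\<close> and \<open>z\<close> exchanged.\<close>

lemma skew_lattice_dual:
  "skew_lattice meet join \<Longrightarrow> skew_lattice join meet"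
  unfolding skew_lattice_def by blast

lemma co_strongly_distributive_iff_dual:
  "co_strongly_distributive meet join \<longleftrightarrow> strongly_distributive join meet"
  unfolding co_strongly_distributive_def strongly_distributive_def ..

lemma skew_lattice_braid_meet:
  assumes "skew_lattice meet join"
  shows "meet (meet x y) (meet (join y x) z) = meet x (meet y z)"
proof -
  from assms have assoc: "\<And>x y z. meet (meet x y) z = meet x (meet y z)"
    and absorb: "\<And>x y. meet x (join x y) = x"
    unfolding skew_lattice_def by auto
  have "meet (meet x y) (meet (join y x) z) = meet x (meet (meet y (join y x)) z)"
    by (simp only: assoc)
  also have "\<dots> = meet x (meet y z)"
    by (simp only: absorb)
  finally show ?thesis .
qed

lemma skew_lattice_braid_join:
  assumes "skew_lattice meet join"
  shows "join (join z y) (join (meet y z) x) = join z (join y x)"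
proof -
  from assms have assoc: "\<And>x y z. join (join x y) z = join x (join y z)"
    and absorb: "\<And>x y. join x (meet x y) = x"
    unfolding skew_lattice_def by auto
  have "join (join z y) (join (meet y z) x) = join z (join (join y (meet y z)) x)"
    by (simp only: assoc)
  also have "\<dots> = join z (join y x)"
    by (simp only: absorb)
  finally show ?thesis .
qed

lemma strongly_distributive_braid_middle:
  assumes "skew_lattice meet join" and "strongly_distributive meet join"
  shows "join (meet (join y x) z) (meet x y) = meet (join (meet y z) x) (join z y)"
proof -
  from assms(1) have meet_assoc: "\<And>x y z. meet (meet x y) z = meet x (meet y z)"
    and join_assoc: "\<And>x y z. join (join x y) z = join x (join y z)"
    and absorb: "\<And>x y. meet x (join x y) = x"
    unfolding skew_lattice_def by auto
  from assms(2) have distl: "\<And>x y z. meet (join x y) z = join (meet x z) (meet y z)"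
    and distr: "\<And>x y z. meet x (join y z) = join (meet x y) (meet x z)"
    unfolding strongly_distributive_def by auto
  have absorb_yz: "meet (meet y z) (join z y) = meet y z"
    by (simp only: meet_assoc absorb)
  have "meet (join (meet y z) x) (join z y)
      = join (meet (meet y z) (join z y)) (meet x (join z y))"
    by (rule distl)
  also have "\<dots> = join (meet y z) (join (meet x z) (meet x y))"
    by (simp only: absorb_yz distr[of x])
  also have "\<dots> = join (meet (join y x) z) (meet x y)"
    by (simp only: distl join_assoc)
  finally show ?thesis ..
qed

lemma co_strongly_distributive_braid_middle:
  assumes "skew_lattice meet join" and "co_strongly_distributive meet join"
  shows "join (meet (join y x) z) (meet x y) = meet (join (meet y z) x) (join z y)"
  using strongly_distributive_braid_middle[of join meet, where x = z and z = x] assms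
  by (simp add: skew_lattice_dual co_strongly_distributive_iff_dual)

lemma braided_r_L:
  assumes "skew_lattice meet join"
    and middle: "\<And>x y z. join (meet (join y x) z) (meet x y) = meet (join (meet y z) x) (join z y)"
  shows "braided (r_L meet join)"
  unfolding braided_def r_L_def r12_def r23_def
  by (rule ext)
    (auto simp: middle skew_lattice_braid_meet[OF assms(1)] skew_lattice_braid_join[OF assms(1)])

theorem mainTheorem11:
  fixes meet join :: "'a \<Rightarrow> 'a \<Rightarrow> 'a"
  assumes "skew_lattice meet join"
    and "strongly_distributive meet join \<or> co_strongly_distributive meet join"
  shows "left_distributive_solution meet join"
  unfolding left_distributive_solution_def
  using assms(2)
proof
  assume "strongly_distributive meet join"
  with assms(1) show "braided (r_L meet join)"
    by (intro braided_r_L strongly_distributive_braid_middle)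
next
  assume "co_strongly_distributive meet join"
  with assms(1) show "braided (r_L meet join)"
    by (intro braided_r_L co_strongly_distributive_braid_middle)
qed

end
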